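(* Let $k>2d_{\text{sp}}$ and let $\mu_1,\dots,\mu_k\in\mathbb{R}^{d_{\text{sp}}}$ be arbitrary fixed vectors. Then the set of tuples $(\Sigma_1,\dots,\Sigma_k)\in(\mathbb{S}^{d_{\text{sp}}}_{++})^k$ for which $\{\Sigma_i,\mu_i\}_{i=1}^k$ does not lie in general position has measure zero in $(\mathbb{S}^{d_{\text{sp}}}_{++})^k$.
   Context: $\mathbb{S}^d_{++}$ denotes the set of $d\times d$ symmetric positive definite matrices, an open subset of the space of symmetric matrices, and measure refers to Lebesgue measure on $(\mathbb{S}^{d_{\text{sp}}}_{++})^k$ viewed as an open subset of a Euclidean space. Given $k>2d_{\text{sp}}$ pairs $\{\Sigma_i,\mu_i\}_{i=1}^k$, they are in general position if for every nonzero ${\mathbf x}\in\mathbb{R}^{d_{\text{sp}}}$, the vectors $\begin{bmatrix}\Sigma_i{\mathbf x}+\mu_i\\ 1\end{bmatrix}\in\mathbb{R}^{d_{\text{sp}}+1}$, $i\in[k]$, span a subspace of dimension $d_{\text{sp}}+1$. *)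

theory Defs
  imports "HOL-Analysis.Analysis"
begin

definition sym_pos_def :: "real^'n^'n \<Rightarrow> bool" where
  "sym_pos_def A \<longleftrightarrow> transpose A = A \<and> (\<forall>x. x \<noteq> 0 \<longrightarrow> x \<bullet> (A *v x) > 0)"

definition ext1 :: "real^'n \<Rightarrow> real^('n option)" where
  "ext1 v = (\<chi> j. case j of None \<Rightarrow> 1 | Some a \<Rightarrow> v $ a)"

definition general_position :: "('k \<Rightarrow> real^'n^'n) \<Rightarrow> ('k \<Rightarrow> real^'n) \<Rightarrow> bool" where
  "general_position Sig mu \<longleftrightarrow>
     (\<forall>x::real^'n. x \<noteq> 0 \<longrightarrow>
        dim (span (range (\<lambda>i. ext1 (Sig i *v x + mu i)))) = CARD('n) + 1)"

text \<open>Coordinates of a k-tuple of symmetric matrices: the upper-triangular entries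
  (a \<le> b) of each matrix; Lebesgue measure on these coordinates is the product of
  Lebesgue measures indexed by this finite set.\<close>
definition sym_index :: "('k \<times> 'n::{finite,linorder} \<times> 'n) set" where
  "sym_index = {(i, a, b). a \<le> b}"

definition sym_space :: "('k \<times> 'n::{finite,linorder} \<times> 'n \<Rightarrow> real) measure" where
  "sym_space = PiM sym_index (\<lambda>_. lborel)"

definition mat_of_coords :: "('k \<times> 'n \<times> 'n \<Rightarrow> real) \<Rightarrow> 'k \<Rightarrow> ((real, 'n::{finite,linorder}) vec, 'n) vec" where
  "mat_of_coords c i = (\<chi> a b. c (i, min a b, max a b))"

end

theory Submission
  imports Defs
begin

text \<open>Failure of general position means: some \<open>x \<noteq> 0\<close> and some affine hyperplane
  \<open>w \<bullet> y + t = 0\<close> (\<open>w \<noteq> 0\<close>) containing all points \<open>\<Sigma>\<^sub>i x + \<mu>\<^sub>i\<close>. Normalise \<open>w $ a0 = 1\<close> and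
  choose an index pair \<open>(a, b)\<close> on which the bilinear form \<open>w\<^sup>T E x\<close> of the symmetric unit
  matrix \<open>E = E\<^sub>a\<^sub>b + E\<^sub>b\<^sub>a\<close> does not vanish. Then the \<open>k\<close> hyperplane equations can be solved
  for the \<open>(a, b)\<close> entries of the \<open>\<Sigma>\<^sub>i\<close>, so a degenerate tuple is determined by its other
  entries and the \<open>2 d\<close> numbers \<open>x, t, w\<close> (without \<open>w $ a0\<close>). Since \<open>k > 2 d\<close>, these data fit
  into a hyperplane of the coordinate space, so the degenerate tuples are covered by finitely
  many differentiable images of hyperplanes, which are null sets.\<close>

section \<open>Lebesgue measure in coordinates indexed by a finite set\<close>

lemma measurable_vec_lambda_PiM:
  fixes Rep :: "'b::finite \<Rightarrow> 'a"
  assumes "range Rep \<subseteq> A"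
  shows "(\<lambda>c. \<chi> j. c (Rep j) :: real^'b) \<in> borel_measurable (PiM A (\<lambda>_. lborel))"
proof -
  have "(\<lambda>c. \<chi> j. c (Rep j) :: real^'b) = (\<lambda>c. \<Sum>j\<in>UNIV. c (Rep j) *\<^sub>R axis j 1)"
    by (auto simp: fun_eq_iff vec_eq_iff axis_def if_distrib cong: if_cong)
  also have "\<dots> \<in> borel_measurable (PiM A (\<lambda>_. lborel))"
  proof (intro borel_measurable_sum borel_measurable_scaleR borel_measurable_const)
    fix j
    have "(\<lambda>c. c (Rep j)) \<in> measurable (PiM A (\<lambda>_. lborel)) lborel"
      using assms by (intro measurable_component_singleton) auto
    then show "(\<lambda>c. c (Rep j)) \<in> borel_measurable (PiM A (\<lambda>_. lborel))"
      by simp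
  qed
  finally show ?thesis .
qed

lemma distr_vec_lambda_PiM_lborel:
  fixes Rep :: "'b::finite \<Rightarrow> 'a"
  assumes bij: "bij_betw Rep UNIV A"
  shows "distr (PiM A (\<lambda>_. lborel)) borel (\<lambda>c. \<chi> j. c (Rep j) :: real^'b) = lborel"
proof (rule lborel_eqI[symmetric])
  interpret product_sigma_finite "\<lambda>_. lborel" by standard
  let ?f = "\<lambda>c. \<chi> j. c (Rep j) :: real^'b"
  let ?Abs = "inv_into UNIV Rep"
  have A: "finite A" "range Rep \<subseteq> A"
    using bij_betw_finite[OF bij] bij by (auto simp: bij_betw_def)
  have Rep_Abs: "Rep (?Abs p) = p" if "p \<in> A" for p
    using bij that by (simp add: bij_betw_def f_inv_into_f)
  fix l u :: "real^'b"
  assume le: "\<And>b. b \<in> Basis \<Longrightarrow> l \<bullet> b \<le> u \<bullet> b"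
  then have le': "l $ j \<le> u $ j" for j
    using le[of "axis j 1"] by (auto simp: cart_eq_inner_axis Basis_vec_def)
  have "?f -` box l u \<inter> space (PiM A (\<lambda>_. lborel)) = PiE A (\<lambda>p. {l $ ?Abs p <..< u $ ?Abs p})"
  proof -
    have "(\<forall>j. l $ j < c (Rep j) \<and> c (Rep j) < u $ j) \<longleftrightarrow>
        (\<forall>p\<in>A. l $ ?Abs p < c p \<and> c p < u $ ?Abs p)" for c
      using bij Rep_Abs by (metis bij_betw_inv_into_left bij_betw_apply UNIV_I)
    then show ?thesis
      by (auto simp: space_PiM mem_box_cart PiE_def Pi_def)
  qed
  then have "emeasure (distr (PiM A (\<lambda>_. lborel)) borel ?f) (box l u)
      = (\<Prod>p\<in>A. ennreal (u $ ?Abs p - l $ ?Abs p))"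
    using A le' by (subst emeasure_distr) (auto simp: emeasure_PiM measurable_vec_lambda_PiM)
  also have "\<dots> = ennreal (\<Prod>j\<in>UNIV. u $ j - l $ j)"
    using prod.reindex_bij_betw[OF bij, of "\<lambda>p. u $ ?Abs p - l $ ?Abs p"] bij le'
    by (simp add: prod_ennreal bij_betw_inv_into_left)
  also have "(\<Prod>j\<in>UNIV. u $ j - l $ j) = (\<Prod>b\<in>Basis. (u - l) \<bullet> b)"
  proof -
    have B: "(Basis :: (real^'b) set) = (\<lambda>j. axis j 1) ` UNIV"
      by (auto simp: Basis_vec_def)
    have "inj (\<lambda>j. axis j (1::real) :: real^'b)"
      by (auto simp: inj_def axis_eq_axis)
    then show ?thesis
      unfolding B by (subst prod.reindex) (auto simp: inner_axis' cart_eq_inner_axis[symmetric])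
  qed
  finally show "emeasure (distr (PiM A (\<lambda>_. lborel)) borel ?f) (box l u) =
      (\<Prod>b\<in>Basis. (u - l) \<bullet> b)" .
qed simp

section \<open>Symmetric matrices as Euclidean coordinates\<close>

text \<open>The coordinates of \<^const>\<open>sym_space\<close> form a type, so that \<^const>\<open>sym_space\<close> becomes
  Lebesgue measure on a Euclidean space, where negligibility can be argued with derivatives.\<close>

typedef (overloaded) ('k, 'n) sym_slot = "sym_index :: ('k \<times> 'n::{finite,linorder} \<times> 'n) set"
  by (rule exI[of _ "(undefined, undefined, undefined)"]) (simp add: sym_index_def)

instance sym_slot :: (finite, "{finite,linorder}") finite
proof
  show "finite (UNIV :: ('a, 'b) sym_slot set)"
    by (metis type_definition.Abs_image[OF type_definition_sym_slot] finite_imageI finite)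
qed

lemma bij_Rep_sym_slot: "bij_betw Rep_sym_slot UNIV sym_index"
  unfolding bij_betw_def
  using type_definition.Rep_range[OF type_definition_sym_slot]
  by (auto simp: inj_def Rep_sym_slot_inject)

definition vec_of_coords ::
    "('k::finite \<times> 'n::{finite,linorder} \<times> 'n \<Rightarrow> real) \<Rightarrow> real^('k, 'n) sym_slot" where
  "vec_of_coords c = (\<chi> j. c (Rep_sym_slot j))"

lemma measurable_vec_of_coords_sym_space: "vec_of_coords \<in> borel_measurable sym_space"
  unfolding vec_of_coords_def sym_space_def
  using bij_Rep_sym_slot by (intro measurable_vec_lambda_PiM) (auto simp: bij_betw_def)

lemma distr_vec_of_coords_sym_space: "distr sym_space borel vec_of_coords = lborel"
  unfolding vec_of_coords_def sym_space_def
  by (rule distr_vec_lambda_PiM_lborel[OF bij_Rep_sym_slot])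

definition slot :: "'n::{finite,linorder} \<Rightarrow> 'n \<Rightarrow> 'k::finite \<Rightarrow> ('k, 'n) sym_slot" where
  "slot a b i = Abs_sym_slot (i, a, b)"

lemma Rep_slot: "a \<le> b \<Longrightarrow> Rep_sym_slot (slot a b i) = (i, a, b)"
  unfolding slot_def by (rule Abs_sym_slot_inverse) (simp add: sym_index_def)

lemma slot_Rep_sym_slot: "Rep_sym_slot j = (i, p, q) \<Longrightarrow> j = slot p q i"
  unfolding slot_def by (metis Rep_sym_slot_inverse)

definition sym_mat ::
    "(real, ('k::finite, 'n::{finite,linorder}) sym_slot) vec \<Rightarrow> 'k \<Rightarrow> ((real, 'n) vec, 'n) vec" where
  "sym_mat u i = (\<chi> p q. u $ slot (min p q) (max p q) i)"

lemma mat_of_coords_eq_sym_mat: "mat_of_coords c = sym_mat (vec_of_coords c)"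
  by (simp add: fun_eq_iff vec_eq_iff mat_of_coords_def sym_mat_def vec_of_coords_def Rep_slot
      min_le_iff_disj)

definition degenerate_configs ::
    "('k::finite \<Rightarrow> real^'n::{finite,linorder}) \<Rightarrow> (real^('k, 'n) sym_slot) set" where
  "degenerate_configs mu =
     {u. \<exists>x w t. x \<noteq> 0 \<and> w \<noteq> 0 \<and> (\<forall>i. w \<bullet> (sym_mat u i *v x) + w \<bullet> mu i + t = 0)}"

lemma inner_ext1: "z \<bullet> ext1 v = z $ None + (\<chi> a. z $ Some a) \<bullet> v"
proof -
  have "z \<bullet> ext1 v = (\<Sum>j\<in>insert None (range Some). z $ j * ext1 v $ j)"
    by (simp add: inner_vec_def UNIV_option_conv)
  also have "\<dots> = z $ None + (\<Sum>a\<in>UNIV. z $ Some a * v $ a)"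
    by (subst sum.insert) (auto simp: ext1_def sum.reindex)
  finally show ?thesis by (simp add: inner_vec_def)
qed

lemma common_hyperplane_if_ext1_not_spanning:
  fixes v :: "'k \<Rightarrow> real^'n"
  assumes "dim (span (range (\<lambda>i. ext1 (v i)))) \<noteq> CARD('n) + 1"
  shows "\<exists>w t. w \<noteq> 0 \<and> (\<forall>i. w \<bullet> v i + t = 0)"
proof -
  let ?V = "range (\<lambda>i. ext1 (v i))"
  have "dim ?V < DIM(real^'n option)"
    using assms dim_subset_UNIV_cart[of ?V] by simp
  then obtain z where "z \<noteq> 0" and z: "\<And>y. y \<in> span ?V \<Longrightarrow> orthogonal z y"
    using orthogonal_to_subspace_exists by blast
  define w where "w = (\<chi> a. z $ Some a)"
  have eq: "w \<bullet> v i + z $ None = 0" for i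
    using z[of "ext1 (v i)"] by (simp add: span_base orthogonal_def inner_ext1 w_def add.commute)
  have "w \<noteq> 0"
  proof
    assume "w = 0"
    then have "z $ None = 0"
      using eq[of undefined] by simp
    moreover have "z $ Some a = 0" for a
      using \<open>w = 0\<close> by (simp add: w_def vec_eq_iff)
    ultimately have "z $ j = 0" for j
      by (cases j) auto
    with \<open>z \<noteq> 0\<close> show False by (simp add: vec_eq_iff)
  qed
  with eq show ?thesis by blast
qed

lemma not_general_position_imp_degenerate:
  fixes u :: "real^('k::finite, 'n::{finite,linorder}) sym_slot"
  assumes "\<not> general_position (sym_mat u) mu"
  shows "u \<in> degenerate_configs mu"
proof -
  obtain x where "x \<noteq> 0"
    and "dim (span (range (\<lambda>i. ext1 (sym_mat u i *v x + mu i)))) \<noteq> CARD('n) + 1"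
    using assms unfolding general_position_def by blast
  then show ?thesis
    using common_hyperplane_if_ext1_not_spanning
    unfolding degenerate_configs_def by (fastforce simp: inner_add_right)
qed

section \<open>Solving for one entry of every matrix\<close>

definition entries ::
    "'n::{finite,linorder} \<Rightarrow> 'n \<Rightarrow> real^('k::finite, 'n) sym_slot \<Rightarrow> 'k \<Rightarrow> real" where
  "entries a b u i = u $ slot a b i"

definition set_entries ::
    "'n::{finite,linorder} \<Rightarrow> 'n \<Rightarrow> real^('k::finite, 'n) sym_slot \<Rightarrow> ('k \<Rightarrow> real)
      \<Rightarrow> real^('k, 'n) sym_slot" where
  "set_entries a b u f =
     (\<chi> j. case Rep_sym_slot j of (i, p, q) \<Rightarrow> if (p, q) = (a, b) then f i else u $ j)"

lemma entries_set_entries: "a \<le> b \<Longrightarrow> entries a b (set_entries a b u f) = f"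
  by (simp add: fun_eq_iff entries_def set_entries_def Rep_slot)

lemma set_entries_set_entries: "set_entries a b (set_entries a b u f) g = set_entries a b u g"
  by (simp add: vec_eq_iff set_entries_def split: prod.split)

lemma set_entries_entries: "set_entries a b u (entries a b u) = u"
  by (auto simp: vec_eq_iff set_entries_def entries_def dest: slot_Rep_sym_slot split: prod.split)

definition sym_unit :: "'n::{finite,linorder} \<Rightarrow> 'n \<Rightarrow> ((real, 'n) vec, 'n) vec" where
  "sym_unit a b = (\<chi> p q. if (min p q, max p q) = (a, b) then 1 else 0)"

lemma sym_mat_set_entries:
  "a \<le> b \<Longrightarrow>
    sym_mat (set_entries a b u f) i = sym_mat (set_entries a b u (\<lambda>_. 0)) i + f i *\<^sub>R sym_unit a b"
  by (simp add: vec_eq_iff sym_mat_def set_entries_def sym_unit_def Rep_slot min_le_iff_disj)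

lemma inner_sym_unit:
  fixes w x :: "real^'n::{finite,linorder}"
  assumes "a \<le> b"
  shows "w \<bullet> (sym_unit a b *v x) = (if a = b then w $ a * x $ a else w $ a * x $ b + w $ b * x $ a)"
proof -
  have "(min p q = a \<and> max p q = b) \<longleftrightarrow> (p = a \<and> q = b) \<or> (p = b \<and> q = a)" for p q
    using assms by (auto simp: min_def max_def)
  then have "w \<bullet> (sym_unit a b *v x) =
      (\<Sum>p\<in>UNIV. \<Sum>q\<in>UNIV. if (p = a \<and> q = b) \<or> (p = b \<and> q = a) then w $ p * x $ q else 0)"
    by (simp add: inner_vec_def matrix_vector_mult_def sym_unit_def sum_distrib_left)
      (auto intro!: sum.cong)
  also have "\<dots> = (if a = b then w $ a * x $ a else w $ a * x $ b + w $ b * x $ a)"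
  proof (cases "a = b")
    case False
    then have "(if (p = a \<and> q = b) \<or> (p = b \<and> q = a) then w $ p * x $ q else 0) =
        (if q = b then if p = a then w $ p * x $ q else 0 else 0) +
        (if q = a then if p = b then w $ p * x $ q else 0 else 0)" for p q
      by auto
    with False show ?thesis by (simp add: sum.distrib)
  next
    case True
    then have "(if (p = a \<and> q = b) \<or> (p = b \<and> q = a) then w $ p * x $ q else 0) =
        (if q = a then if p = a then w $ p * x $ q else 0 else 0)" for p q
      by auto
    with True show ?thesis by simp
  qed
  finally show ?thesis .
qed

lemma exists_sym_unit_form_nonzero:
  fixes w x :: "real^'n::{finite,linorder}"
  assumes "w \<noteq> 0" "x \<noteq> 0"
  shows "\<exists>a b. a \<le> b \<and> w \<bullet> (sym_unit a b *v x) \<noteq> 0"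
proof (rule ccontr)
  assume "\<not> ?thesis"
  then have vanish: "\<And>a b. a \<le> b \<Longrightarrow> w \<bullet> (sym_unit a b *v x) = 0" by blast
  obtain c where c: "x $ c \<noteq> 0" using assms(2) by (auto simp: vec_eq_iff)
  then have wc: "w $ c = 0" using vanish[of c c] by (simp add: inner_sym_unit)
  have "w $ d * x $ c = 0" for d
  proof (cases d c rule: linorder_cases)
    case less
    then show ?thesis
      using vanish[OF less_imp_le[OF less]] less_imp_neq[OF less] wc by (simp add: inner_sym_unit)
  next
    case greater
    then show ?thesis
      using vanish[OF less_imp_le[OF greater]] less_imp_neq[OF greater] wc
      by (simp add: inner_sym_unit)
  qed (use wc in simp)
  with c have "w = 0" by (simp add: vec_eq_iff)
  with assms(1) show False ..
qed

definition solve_entries ::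
    "('k::finite \<Rightarrow> (real, 'n::{finite,linorder}) vec) \<Rightarrow> 'n \<Rightarrow> 'n \<Rightarrow> (real, 'n) vec
      \<Rightarrow> (real, 'n) vec \<Rightarrow> real \<Rightarrow> real^('k, 'n) sym_slot \<Rightarrow> 'k \<Rightarrow> real" where
  "solve_entries mu a b w x t u i =
     - (w \<bullet> (sym_mat (set_entries a b u (\<lambda>_. 0)) i *v x) + w \<bullet> mu i + t)
       / (w \<bullet> (sym_unit a b *v x))"

lemma solve_entries_set_entries:
  "solve_entries mu a b w x t (set_entries a b u f) = solve_entries mu a b w x t u"
  by (simp add: fun_eq_iff solve_entries_def set_entries_set_entries)

lemma solve_entries_eq_entries:
  assumes "a \<le> b" "w \<bullet> (sym_unit a b *v x) \<noteq> 0"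
    and "\<And>i. w \<bullet> (sym_mat u i *v x) + w \<bullet> mu i + t = 0"
  shows "solve_entries mu a b w x t u = entries a b u"
proof
  fix i
  have "sym_mat u i = sym_mat (set_entries a b u (\<lambda>_. 0)) i + entries a b u i *\<^sub>R sym_unit a b"
    using sym_mat_set_entries[OF assms(1), of u "entries a b u"] by (simp add: set_entries_entries)
  then have "w \<bullet> (sym_mat u i *v x) =
      w \<bullet> (sym_mat (set_entries a b u (\<lambda>_. 0)) i *v x)
        + entries a b u i * (w \<bullet> (sym_unit a b *v x))"
    by (simp add: matrix_vector_mult_add_rdistrib inner_add_right
        scaleR_matrix_vector_assoc[symmetric])
  with assms(2) assms(3)[of i] show "solve_entries mu a b w x t u i = entries a b u i"
    by (simp add: solve_entries_def field_simps)
qed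

section \<open>Parametrising the degenerate configurations\<close>

text \<open>A degenerate configuration with witness \<open>(w, x, t)\<close>, normalised to \<open>w $ a0 = 1\<close>, is
  recovered from its off-\<open>(a, b)\<close> entries together with \<open>2 CARD('n)\<close> numbers, which
  \<open>param_map\<close> reads from the \<open>(a, b)\<close> entries of the matrices \<open>e (Inl c)\<close> (for \<open>x $ c\<close>)
  and \<open>e (Inr c)\<close> (for \<open>w $ c\<close>, and for \<open>t\<close> in place of the known \<open>w $ a0\<close>). The \<open>(a, b)\<close>
  entry of a further matrix \<open>i0 \<notin> range e\<close> carries no information, so the parameters fill
  only a hyperplane.\<close>

definition witness_x :: "('n + 'n \<Rightarrow> 'k) \<Rightarrow> ('k \<Rightarrow> real) \<Rightarrow> real^'n" where
  "witness_x e g = (\<chi> c. g (e (Inl c)))"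

definition witness_w :: "('n + 'n \<Rightarrow> 'k) \<Rightarrow> 'n \<Rightarrow> ('k \<Rightarrow> real) \<Rightarrow> real^'n" where
  "witness_w e a0 g = (\<chi> c. if c = a0 then 1 else g (e (Inr c)))"

definition witness_t :: "('n + 'n \<Rightarrow> 'k) \<Rightarrow> 'n \<Rightarrow> ('k \<Rightarrow> real) \<Rightarrow> real" where
  "witness_t e a0 g = g (e (Inr a0))"

definition encode_witness :: "('n + 'n \<Rightarrow> 'k) \<Rightarrow> 'n \<Rightarrow> real^'n \<Rightarrow> real^'n \<Rightarrow> real \<Rightarrow> 'k \<Rightarrow> real" where
  "encode_witness e a0 w x t i =
     (if i \<in> range e
      then case inv e i of Inl c \<Rightarrow> x $ c | Inr c \<Rightarrow> if c = a0 then t else w $ c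
      else 0)"

lemma witness_encode_witness:
  assumes "inj e" "w $ a0 = 1"
  shows "witness_x e (encode_witness e a0 w x t) = x"
    and "witness_w e a0 (encode_witness e a0 w x t) = w"
    and "witness_t e a0 (encode_witness e a0 w x t) = t"
  using assms
  by (auto simp: vec_eq_iff witness_x_def witness_w_def witness_t_def encode_witness_def inv_f_f)

definition param_map ::
    "('n::{finite,linorder} + 'n \<Rightarrow> 'k::finite) \<Rightarrow> ('k \<Rightarrow> (real, 'n) vec) \<Rightarrow> 'n \<Rightarrow> 'n \<Rightarrow> 'n
      \<Rightarrow> real^('k, 'n) sym_slot \<Rightarrow> real^('k, 'n) sym_slot" where
  "param_map e mu a0 a b v = set_entries a b v
     (solve_entries mu a b (witness_w e a0 (entries a b v)) (witness_x e (entries a b v))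
        (witness_t e a0 (entries a b v)) v)"

definition param_domain ::
    "('n::{finite,linorder} + 'n \<Rightarrow> 'k::finite) \<Rightarrow> 'k \<Rightarrow> 'n \<Rightarrow> 'n \<Rightarrow> 'n
      \<Rightarrow> (real^('k, 'n) sym_slot) set" where
  "param_domain e i0 a0 a b =
     {v. entries a b v i0 = 0 \<and>
         witness_w e a0 (entries a b v) \<bullet> (sym_unit a b *v witness_x e (entries a b v)) \<noteq> 0}"

lemma negligible_param_domain: "negligible (param_domain e i0 a0 a b)"
  by (rule negligible_subset[OF negligible_standard_hyperplane_cart[of "slot a b i0"]])
    (auto simp: param_domain_def entries_def)

lemma degenerate_configs_subset_param_images:
  fixes e :: "'n::{finite,linorder} + 'n \<Rightarrow> 'k::finite"
  assumes "inj e" "i0 \<notin> range e"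
  shows "degenerate_configs mu \<subseteq> (\<Union>(a0, a, b). param_map e mu a0 a b ` param_domain e i0 a0 a b)"
proof
  fix u assume "u \<in> degenerate_configs mu"
  then obtain x w t where "x \<noteq> 0" "w \<noteq> 0" and eq: "\<And>i. w \<bullet> (sym_mat u i *v x) + w \<bullet> mu i + t = 0"
    unfolding degenerate_configs_def by blast
  obtain a0 where "w $ a0 \<noteq> 0"
    using \<open>w \<noteq> 0\<close> by (auto simp: vec_eq_iff)
  define w' where "w' = (1 / w $ a0) *\<^sub>R w"
  define t' where "t' = t / w $ a0"
  have w'_a0: "w' $ a0 = 1"
    using \<open>w $ a0 \<noteq> 0\<close> by (simp add: w'_def)
  have eq': "w' \<bullet> (sym_mat u i *v x) + w' \<bullet> mu i + t' = 0" for i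
    using eq[of i] by (simp add: w'_def t'_def add_divide_distrib[symmetric])
  obtain a b where "a \<le> b" and nz: "w' \<bullet> (sym_unit a b *v x) \<noteq> 0"
    using exists_sym_unit_form_nonzero[of w' x] w'_a0 \<open>x \<noteq> 0\<close> by force
  define v where "v = set_entries a b u (encode_witness e a0 w' x t')"
  have v_entries: "entries a b v = encode_witness e a0 w' x t'"
    using \<open>a \<le> b\<close> by (simp add: v_def entries_set_entries)
  have "param_map e mu a0 a b v = set_entries a b v (solve_entries mu a b w' x t' v)"
    using assms(1) w'_a0 by (simp add: param_map_def v_entries witness_encode_witness)
  also have "\<dots> = set_entries a b u (solve_entries mu a b w' x t' u)"
    by (simp add: v_def set_entries_set_entries solve_entries_set_entries)
  also have "\<dots> = u"
    using solve_entries_eq_entries[OF \<open>a \<le> b\<close> nz eq'] by (simp add: set_entries_entries)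
  finally have "param_map e mu a0 a b v = u" .
  moreover have "v \<in> param_domain e i0 a0 a b"
    using assms nz
    by (simp add: param_domain_def v_entries witness_encode_witness w'_a0 encode_witness_def)
  ultimately show "u \<in> (\<Union>(a0, a, b). param_map e mu a0 a b ` param_domain e i0 a0 a b)"
    by force
qed

lemma differentiable_vec_nth: "(\<lambda>v. v $ j) differentiable F"
  by (rule bounded_linear_imp_differentiable[OF bounded_linear_vec_nth])

lemma differentiable_vec_componentwise:
  fixes f :: "'a::real_normed_vector \<Rightarrow> real^'n"
  assumes "\<And>j. (\<lambda>v. f v $ j) differentiable (at z within S)"
  shows "f differentiable (at z within S)"
proof (subst differentiable_componentwise_within, intro ballI)
  fix b :: "real^'n" assume "b \<in> Basis"
  then obtain j where "b = axis j 1" by (auto simp: Basis_vec_def)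
  then show "(\<lambda>v. f v \<bullet> b) differentiable (at z within S)"
    using assms[of j] by (simp add: cart_eq_inner_axis[symmetric])
qed

lemma differentiable_inner_matrix_vector_mult:
  fixes W X :: "'a::real_normed_vector \<Rightarrow> real^'n" and M :: "'a \<Rightarrow> real^'n^'n"
  assumes "\<And>p. (\<lambda>v. W v $ p) differentiable (at z within S)"
    and "\<And>p q. (\<lambda>v. M v $ p $ q) differentiable (at z within S)"
    and "\<And>q. (\<lambda>v. X v $ q) differentiable (at z within S)"
  shows "(\<lambda>v. W v \<bullet> (M v *v X v)) differentiable (at z within S)"
  unfolding inner_vec_def matrix_vector_mult_def inner_real_def vec_lambda_beta
  by (intro differentiable_sum differentiable_mult ballI finite assms)

lemma param_map_differentiable:
  fixes e :: "'n::{finite,linorder} + 'n \<Rightarrow> 'k::finite"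
  shows "param_map e mu a0 a b differentiable_on param_domain e i0 a0 a b"
  unfolding differentiable_on_def
proof
  fix z assume z: "z \<in> param_domain e i0 a0 a b"
  let ?D = "at z within param_domain e i0 a0 a b"
  let ?W = "\<lambda>v. witness_w e a0 (entries a b v)"
  let ?X = "\<lambda>v. witness_x e (entries a b v)"
  let ?T = "\<lambda>v. witness_t e a0 (entries a b v)"
  have W: "(\<lambda>v. ?W v $ p) differentiable ?D" for p
    by (cases "p = a0") (simp_all add: witness_w_def entries_def differentiable_vec_nth)
  have X: "(\<lambda>v. ?X v $ p) differentiable ?D" for p
    by (simp add: witness_x_def entries_def differentiable_vec_nth)
  have T: "?T differentiable ?D"
    by (simp add: witness_t_def entries_def differentiable_vec_nth)
  have M: "(\<lambda>v. sym_mat (set_entries a b v (\<lambda>_. 0)) i $ p $ q) differentiable ?D" for i p q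
    by (cases "min p q = a \<and> max p q = b")
      (auto simp: sym_mat_def set_entries_def Rep_slot min_le_iff_disj differentiable_vec_nth)
  have solve: "(\<lambda>v. solve_entries mu a b (?W v) (?X v) (?T v) v i) differentiable ?D" for i
    unfolding solve_entries_def
    using z W X T M differentiable_vec_componentwise[OF W]
    by (intro differentiable_divide differentiable_minus differentiable_add differentiable_inner
        differentiable_inner_matrix_vector_mult differentiable_const)
      (simp_all add: param_domain_def)
  show "param_map e mu a0 a b differentiable ?D"
  proof (rule differentiable_vec_componentwise)
    fix j :: "('k, 'n) sym_slot"
    obtain i p q where "Rep_sym_slot j = (i, p, q)"
      by (metis prod_cases3)
    with solve[of i] show "(\<lambda>v. param_map e mu a0 a b v $ j) differentiable ?D"
      by (cases "p = a \<and> q = b") (auto simp: param_map_def set_entries_def differentiable_vec_nth)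
  qed
qed

lemma negligible_degenerate_configs:
  fixes mu :: "'k::finite \<Rightarrow> real^'n::{finite,linorder}"
  assumes "CARD('k) > 2 * CARD('n)"
  shows "negligible (degenerate_configs mu)"
proof -
  obtain i0 :: 'k and e :: "'n + 'n \<Rightarrow> 'k" where "inj e" "i0 \<notin> range e"
  proof -
    have "card (UNIV :: ('n + 'n) set) \<le> card (UNIV - {undefined :: 'k})"
      using assms by (simp add: card_UNIV_sum)
    then obtain e :: "'n + 'n \<Rightarrow> 'k" where "inj e" "range e \<subseteq> UNIV - {undefined}"
      using card_le_inj[of "UNIV :: ('n + 'n) set" "UNIV - {undefined :: 'k}"] by auto
    then show thesis
      using that by blast
  qed
  have "negligible (\<Union>(a0, a, b). param_map e mu a0 a b ` param_domain e i0 a0 a b)"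
    by (rule negligible_Union)
      (auto intro!: negligible_differentiable_image_negligible negligible_param_domain
         param_map_differentiable)
  then show ?thesis
    using degenerate_configs_subset_param_images[OF \<open>inj e\<close> \<open>i0 \<notin> range e\<close>]
    by (rule negligible_subset)
qed

theorem lemmaS4:
  fixes mu :: "'k::finite \<Rightarrow> real^'n::{finite,linorder}"
  assumes "CARD('k) > 2 * CARD('n)"
  shows "\<exists>N \<in> null_sets (sym_space :: ('k \<times> 'n \<times> 'n \<Rightarrow> real) measure).
           {c \<in> space sym_space. (\<forall>i. sym_pos_def (mat_of_coords c i))
                \<and> \<not> general_position (mat_of_coords c) mu} \<subseteq> N"
proof -
  obtain N' where N': "N' \<in> null_sets lborel" "degenerate_configs mu \<subseteq> N'"
    using negligible_degenerate_configs[OF assms, of mu]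
    unfolding negligible_iff_null_sets null_sets_completion_iff2 by blast
  let ?N = "vec_of_coords -` N' \<inter> space (sym_space :: ('k \<times> 'n \<times> 'n \<Rightarrow> real) measure)"
  have "N' \<in> null_sets (distr sym_space borel vec_of_coords)"
    using N'(1) by (simp add: distr_vec_of_coords_sym_space)
  then have "?N \<in> null_sets sym_space"
    by (simp add: null_sets_distr_iff[OF measurable_vec_of_coords_sym_space])
  moreover have "{c \<in> space sym_space. (\<forall>i. sym_pos_def (mat_of_coords c i))
                \<and> \<not> general_position (mat_of_coords c) mu} \<subseteq> ?N"
    using N'(2) not_general_position_imp_degenerate by (auto simp: mat_of_coords_eq_sym_mat)
  ultimately show ?thesis by blast
qed

end
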